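(* Let $P\in\mathcal{RP}$ and assume $x_P^+\notin X_P^-$, $x_P^-\notin X_P^+$, $y_P^+\notin Y_P^-$, $y_P^-\notin Y_P^+$. Suppose that for every choice of integers $n_x$ ($x\in X_P\setminus\{0\}$) and $m_y$ ($y\in Y_P\setminus\{0\}$), not all zero, with $n_{x_P^+}\cdot n_{x_P^-}\ge0$ and $m_{y_P^+}\cdot m_{y_P^-}\ge0$ (an index equal to $0$ being omitted), we have $$\sum_{x\in X_P\setminus\{0\}}n_x x-\sum_{y\in Y_P\setminus\{0\}}m_y y\neq0.$$ Then $P$ is not resonant.
   Context: $\mathcal{RP}$ is the family of bounded planar polygons (not necessarily connected or simply connected) whose boundary is a finite union of vertical and horizontal segments. For $P\in\mathcal{RP}$: $X_P^+$ is the set of non-negative first coordinates of vertical sides of $P$; $X_P^-$ is the set of numbers $-x$ where $x<0$ is the first coordinate of a vertical side; $Y_P^+$, $Y_P^-$ are defined analogously from second coordinates of horizontal sides; $X_P=X_P^+\cup X_P^-$, $Y_P=Y_P^+\cup Y_P^-$; $x_P^\pm=\max X_P^\pm$, $y_P^\pm=\max Y_P^\pm$ with the convention $\max\emptyset=0$. The billiard flow on $P$ in directions $\pm\pi/4,\pm3\pi/4$ moves points with unit speed along these diagonal directions and reflects elastically off the sides. $P$ is resonant if this billiard flow has an orbit segment joining two (not necessarily distinct) corners of $P$. *)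

theory Defs
  imports "HOL-Analysis.Analysis"
begin

text \<open>A rectilinear polygon (class RP) is a
 nonempty finite union of nondegenerate closed axis-parallel rectangles; these are exactly
 the bounded (regular closed) planar regions whose boundary is a finite union of
 horizontal and vertical segments.\<close>

definition RP :: "(real \<times> real) set \<Rightarrow> bool" where
  "RP P \<longleftrightarrow> (\<exists>R :: (real \<times> real \<times> real \<times> real) set.
      finite R \<and> R \<noteq> {} \<and> (\<forall>(a,b,c,d)\<in>R. a < b \<and> c < d) \<and>
      P = (\<Union>(a,b,c,d)\<in>R. {a..b} \<times> {c..d}))"

definition vert_coords :: "(real \<times> real) set \<Rightarrow> real set" where
  "vert_coords P = {x. \<exists>c d. c < d \<and> {x} \<times> {c..d} \<subseteq> frontier P}"

definition horiz_coords :: "(real \<times> real) set \<Rightarrow> real set" where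
  "horiz_coords P = {y. \<exists>a b. a < b \<and> {a..b} \<times> {y} \<subseteq> frontier P}"

definition XP_plus :: "(real \<times> real) set \<Rightarrow> real set" where
  "XP_plus P = {x \<in> vert_coords P. x \<ge> 0}"
definition XP_minus :: "(real \<times> real) set \<Rightarrow> real set" where
  "XP_minus P = {- x | x. x \<in> vert_coords P \<and> x < 0}"
definition YP_plus :: "(real \<times> real) set \<Rightarrow> real set" where
  "YP_plus P = {y \<in> horiz_coords P. y \<ge> 0}"
definition YP_minus :: "(real \<times> real) set \<Rightarrow> real set" where
  "YP_minus P = {- y | y. y \<in> horiz_coords P \<and> y < 0}"

definition XP :: "(real \<times> real) set \<Rightarrow> real set" where
  "XP P = XP_plus P \<union> XP_minus P"
definition YP :: "(real \<times> real) set \<Rightarrow> real set" where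
  "YP P = YP_plus P \<union> YP_minus P"

definition max0 :: "real set \<Rightarrow> real" where
  "max0 S = (if S = {} then 0 else Max S)"

definition xP_plus where "xP_plus P = max0 (XP_plus P)"
definition xP_minus where "xP_minus P = max0 (XP_minus P)"
definition yP_plus where "yP_plus P = max0 (YP_plus P)"
definition yP_minus where "yP_minus P = max0 (YP_minus P)"

definition corner :: "(real \<times> real) set \<Rightarrow> real \<times> real \<Rightarrow> bool" where
  "corner P p \<longleftrightarrow> p \<in> frontier P \<and>
     (\<exists>e>0. \<exists>sx\<in>{-1,1}. \<exists>sy\<in>{-1,1}.
        closed_segment p (p + (sx * e, 0)) \<subseteq> frontier P \<and>
        closed_segment p (p + (0, sy * e)) \<subseteq> frontier P)"

definition on_vside :: "(real \<times> real) set \<Rightarrow> real \<times> real \<Rightarrow> bool" where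
  "on_vside P p \<longleftrightarrow> (\<exists>e>0. closed_segment (p - (0, e)) (p + (0, e)) \<subseteq> frontier P)"
definition on_hside :: "(real \<times> real) set \<Rightarrow> real \<times> real \<Rightarrow> bool" where
  "on_hside P p \<longleftrightarrow> (\<exists>e>0. closed_segment (p - (e, 0)) (p + (e, 0)) \<subseteq> frontier P)"

text \<open>Resonance: an orbit segment of the billiard flow in the diagonal directions
 (direction vectors (a,b) with a,b = +-1, i.e. angles +-pi/4, +-3pi/4) joining two corners.\<close>
definition resonant :: "(real \<times> real) set \<Rightarrow> bool" where
  "resonant P \<longleftrightarrow> (\<exists>k::nat. \<exists>q d :: nat \<Rightarrow> real \<times> real. k \<ge> 1 \<and>
     corner P (q 0) \<and> corner P (q k) \<and>
     (\<forall>i<k. fst (d i) \<in> {-1, 1} \<and> snd (d i) \<in> {-1, 1} \<and>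
            (\<exists>t>0. q (Suc i) = q i + t *\<^sub>R d i) \<and>
            closed_segment (q i) (q (Suc i)) \<subseteq> P \<and>
            open_segment (q i) (q (Suc i)) \<subseteq> interior P) \<and>
     (\<forall>i. 0 < i \<and> i < k \<longrightarrow>
            q i \<in> frontier P \<and> \<not> corner P (q i) \<and>
            (on_vside P (q i) \<longrightarrow> d i = (- fst (d (i - 1)), snd (d (i - 1)))) \<and>
            (on_hside P (q i) \<longrightarrow> d i = (fst (d (i - 1)), - snd (d (i - 1))))))"

end

theory Submission
  imports Defs
begin

text \<open>Let a resonant orbit run from corner to corner through the vertices \<open>q\<^sub>0, \<dots>, q\<^sub>k\<close>, its
  \<open>i\<close>-th leg taking time \<open>t\<^sub>i\<close> with velocity \<open>(a\<^sub>i, b\<^sub>i)\<close>, \<open>a\<^sub>i, b\<^sub>i = \<plusminus>1\<close>. As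
  \<open>a\<^sub>i (x\<^sub>i\<^sub>+\<^sub>1 - x\<^sub>i) = t\<^sub>i\<close>, summation by parts writes the total time \<open>T = \<Sum> t\<^sub>i\<close> as
  \<open>\<Sum> (a\<^sub>j\<^sub>-\<^sub>1 - a\<^sub>j) x\<^sub>j\<close>, where only the two corners and the vertices at which the horizontal
  velocity flips contribute. Since a boundary point that is not a corner lies in the relative
  interior of a vertical or a horizontal side (near any point a finite union of boxes is a union
  of closed quadrants), these abscissae are coordinates of vertical sides, and grouping by
  absolute value gives \<open>T = \<Sum> n\<^sub>x x\<close> over \<open>X\<^sub>P\<close>; likewise \<open>T = \<Sum> m\<^sub>y y\<close> over \<open>Y\<^sub>P\<close>.
  At the largest abscissa \<open>x\<^sub>P\<^sup>+\<close> the orbit can only arrive moving right and leave moving left,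
  so the vertices there contribute nonnegatively, while \<open>-x\<^sub>P\<^sup>+\<close> contributes nothing as it is
  not a vertical coordinate; so the coefficient of \<open>x\<^sub>P\<^sup>+\<close> is nonnegative, and likewise that of
  \<open>x\<^sub>P\<^sup>-\<close>. As \<open>T > 0\<close>, this is a nontrivial relation of the excluded kind.\<close>

section \<open>Rectilinear polygons as finite unions of boxes\<close>

definition boxes :: "(real \<times> real \<times> real \<times> real) set \<Rightarrow> (real \<times> real) set" where
  "boxes R = (\<Union>(a, b, c, d)\<in>R. {a..b} \<times> {c..d})"

lemma mem_boxes:
  "p \<in> boxes R \<longleftrightarrow> (\<exists>a b c d. (a, b, c, d) \<in> R \<and> a \<le> fst p \<and> fst p \<le> b \<and> c \<le> snd p \<and> snd p \<le> d)"
  unfolding boxes_def by (cases p) force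

lemma RP_boxesE:
  assumes "RP P"
  obtains R where "finite R" "R \<noteq> {}" "\<And>a b c d. (a, b, c, d) \<in> R \<Longrightarrow> a < b \<and> c < d"
    "P = boxes R"
  using assms unfolding RP_def boxes_def by (smt (verit) case_prodD)

lemma closed_boxes: "finite R \<Longrightarrow> closed (boxes R)"
  unfolding boxes_def by (auto intro!: closed_Times)

lemma RP_closed: "RP P \<Longrightarrow> closed P"
  by (metis RP_boxesE closed_boxes)

lemma frontier_swap: "frontier (prod.swap ` S) = prod.swap ` frontier (S :: (real \<times> real) set)"
proof -
  have "linear (prod.swap :: real \<times> real \<Rightarrow> _)" "inj prod.swap"
    by (simp_all add: linear_iff)
  then show ?thesis
    unfolding frontier_def
    by (simp add: closure_injective_linear_image interior_injective_linear_image image_set_diff)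
qed

lemma boxes_swap: "prod.swap ` boxes R = boxes ((\<lambda>(a, b, c, d). (c, d, a, b)) ` R)"
  unfolding boxes_def image_UN by (simp add: product_swap split_def)

lemma swap_subset_iff: "A \<subseteq> prod.swap ` F \<longleftrightarrow> prod.swap ` A \<subseteq> F"
  by (auto simp: image_subset_iff)

lemma RP_swap: "RP P \<Longrightarrow> RP (prod.swap ` P)"
proof -
  assume "RP P"
  then obtain R where R: "finite R" "R \<noteq> {}" "\<And>a b c d. (a, b, c, d) \<in> R \<Longrightarrow> a < b \<and> c < d"
    "P = boxes R" by (metis RP_boxesE)
  let ?R' = "(\<lambda>(a, b, c, d). (c, d, a, b)) ` R"
  have "finite ?R'" "?R' \<noteq> {}" "\<forall>(a, b, c, d)\<in>?R'. a < b \<and> c < d" "prod.swap ` P = boxes ?R'"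
    using R boxes_swap by auto
  then show ?thesis
    unfolding RP_def boxes_def by blast
qed

lemma horiz_coords_eq_vert_coords_swap: "horiz_coords P = vert_coords (prod.swap ` P)"
  unfolding horiz_coords_def vert_coords_def frontier_swap swap_subset_iff product_swap ..

lemma frontier_boxes_on_edges:
  assumes "finite R" "p \<in> frontier (boxes R)"
  shows "\<exists>(a, b, c, d)\<in>R. fst p \<in> {a, b} \<or> snd p \<in> {c, d}"
proof (rule ccontr)
  assume off_edges: "\<not> ?thesis"
  have "p \<in> boxes R"
    using assms closed_boxes frontier_subset_closed by blast
  then obtain a b c d where box: "(a, b, c, d) \<in> R" "a \<le> fst p" "fst p \<le> b" "c \<le> snd p" "snd p \<le> d"
    by (auto simp: mem_boxes)
  then have "p \<in> {a<..<b} \<times> {c<..<d}"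
    using off_edges by (cases p) force
  moreover have "{a<..<b} \<times> {c<..<d} \<subseteq> boxes R"
    using box(1) by (force simp: mem_boxes)
  moreover have "open ({a<..<b} \<times> {c<..<d})"
    by (intro open_Times) auto
  ultimately have "p \<in> interior (boxes R)"
    by (rule interiorI[rotated])
  then show False
    using assms(2) by (simp add: frontier_def)
qed

lemma finite_vert_coords:
  assumes "RP P"
  shows "finite (vert_coords P)"
proof -
  obtain R where R: "finite R" "P = boxes R"
    using assms by (metis RP_boxesE)
  define X where "X = (\<lambda>(a, b, c, d). a) ` R \<union> (\<lambda>(a, b, c, d). b) ` R"
  define Y where "Y = (\<lambda>(a, b, c, d). c) ` R \<union> (\<lambda>(a, b, c, d). d) ` R"
  have "vert_coords P \<subseteq> X"
  proof
    fix x
    assume "x \<in> vert_coords P"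
    then obtain c d where cd: "c < d" "{x} \<times> {c..d} \<subseteq> frontier P"
      unfolding vert_coords_def by blast
    have "finite Y"
      using R(1) by (simp add: Y_def)
    then have "\<not> {c..d} \<subseteq> Y"
      using cd(1) infinite_Icc finite_subset by metis
    then obtain y where y: "y \<in> {c..d}" "y \<notin> Y"
      by blast
    then have "(x, y) \<in> frontier (boxes R)"
      using cd(2) R(2) by auto
    then obtain a b c' d' where "(a, b, c', d') \<in> R" "x \<in> {a, b} \<or> y \<in> {c', d'}"
      using frontier_boxes_on_edges[OF R(1)] by fastforce
    then show "x \<in> X"
      using y(2) unfolding X_def Y_def by force
  qed
  then show ?thesis
    using R(1) finite_subset X_def by auto
qed

lemma RP_extreme_vert_coord:
  fixes s :: real
  assumes "RP P" "s \<in> {-1, 1}"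
  obtains B where "B \<in> vert_coords P" "\<And>p. p \<in> P \<Longrightarrow> s * fst p \<le> s * B"
proof -
  obtain R where R: "finite R" "R \<noteq> {}" "\<And>a b c d. (a, b, c, d) \<in> R \<Longrightarrow> a < b \<and> c < d"
    "P = boxes R"
    using assms(1) by (metis RP_boxesE)
  define edge :: "real \<times> real \<times> real \<times> real \<Rightarrow> real"
    where "edge = (\<lambda>(a, b, c, d). if s = 1 then b else a)"
  obtain r0 where r0: "r0 \<in> R" "\<And>r. r \<in> R \<Longrightarrow> s * edge r \<le> s * edge r0"
  proof -
    have "Max ((\<lambda>r. s * edge r) ` R) \<in> (\<lambda>r. s * edge r) ` R"
      using R(1,2) by (intro Max_in) auto
    then obtain r0 where "r0 \<in> R" "s * edge r0 = Max ((\<lambda>r. s * edge r) ` R)"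
      by (metis imageE)
    then show ?thesis
      using that R(1) by (metis Max_ge finite_imageI imageI)
  qed
  obtain a b c d where box: "(a, b, c, d) \<in> R"
    and outermost: "\<And>r. r \<in> R \<Longrightarrow> s * edge r \<le> s * edge (a, b, c, d)"
    using r0 by (cases r0) auto
  define B where "B = edge (a, b, c, d)"
  have ab: "a < b" "c < d"
    using R(3) box by auto
  have bound: "s * fst p \<le> s * B" if p: "p \<in> P" for p
  proof -
    obtain a' b' c' d' where "(a', b', c', d') \<in> R" "a' \<le> fst p" "fst p \<le> b'"
      using p R(4) by (auto simp: mem_boxes)
    then show ?thesis
      using outermost[of "(a', b', c', d')"] assms(2) by (auto simp: edge_def B_def)
  qed
  have "{B} \<times> {c..d} \<subseteq> frontier P"
  proof
    fix p
    assume p: "p \<in> {B} \<times> {c..d}"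
    have "p \<in> P"
      using p box ab assms(2) R(4) by (force simp: mem_boxes edge_def B_def)
    moreover have "(fst p + s * \<epsilon> / 2, snd p) \<notin> P" if "\<epsilon> > 0" for \<epsilon>
      using bound[of "(fst p + s * \<epsilon> / 2, snd p)"] p that assms(2) by auto
    moreover have "dist p (fst p + s * \<epsilon> / 2, snd p) < \<epsilon>" if "\<epsilon> > 0" for \<epsilon>
      using that assms(2) by (cases p) (auto simp: dist_Pair_Pair dist_real_def)
    ultimately show "p \<in> frontier P"
      unfolding frontier_straddle by (metis dist_self)
  qed
  then show ?thesis
    using that[of B] bound ab(2) unfolding vert_coords_def by blast
qed

lemma max0_nonneg: "finite S \<Longrightarrow> \<forall>x\<in>S. 0 \<le> x \<Longrightarrow> 0 \<le> max0 S"
  unfolding max0_def by (auto intro: order_trans[OF _ Max_ge])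

lemma le_max0I:
  assumes "finite S" "\<forall>x\<in>S. 0 \<le> x" "z \<le> B" "B \<in> S \<or> B \<le> 0"
  shows "z \<le> max0 S"
proof (cases "B \<in> S")
  case True
  then have "B \<le> max0 S"
    using assms(1) by (auto simp: max0_def)
  then show ?thesis
    using assms(3) by linarith
next
  case False
  then show ?thesis
    using assms max0_nonneg[OF assms(1,2)] by linarith
qed

lemma vert_coordI:
  assumes "closed_segment (x, y1) (x, y2) \<subseteq> frontier P" "y1 \<noteq> y2"
  shows "x \<in> vert_coords P"
  using assms unfolding vert_coords_def
  by (intro CollectI exI[of _ "min y1 y2"] exI[of _ "max y1 y2"])
    (auto simp: closed_segment_same_fst closed_segment_eq_real_ivl min_def max_def split: if_splits)

lemma horiz_coordI:
  assumes "closed_segment (x1, y) (x2, y) \<subseteq> frontier P" "x1 \<noteq> x2"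
  shows "y \<in> horiz_coords P"
  using assms unfolding horiz_coords_def
  by (intro CollectI exI[of _ "min x1 x2"] exI[of _ "max x1 x2"])
    (auto simp: closed_segment_same_snd closed_segment_eq_real_ivl min_def max_def split: if_splits)

lemma corner_coords:
  assumes "corner P p"
  shows "fst p \<in> vert_coords P" "snd p \<in> horiz_coords P"
proof -
  obtain e sx sy where e: "e > 0" "sx \<in> {-1, 1}" "sy \<in> {-1, 1}"
    "closed_segment p (p + (sx * e, 0)) \<subseteq> frontier P"
    "closed_segment p (p + (0, sy * e)) \<subseteq> frontier P"
    using assms unfolding corner_def by blast
  show "fst p \<in> vert_coords P"
    using e(1,3,5) by (intro vert_coordI[of _ "snd p" "snd p + sy * e"]) (cases p, auto)
  show "snd p \<in> horiz_coords P"
    using e(1,2,4) by (intro horiz_coordI[of "fst p" _ "fst p + sx * e"]) (cases p, auto)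
qed

lemma on_vside_vert_coord: "on_vside P p \<Longrightarrow> fst p \<in> vert_coords P"
  unfolding on_vside_def
  by (elim exE conjE, rule vert_coordI[of _ "snd p - _" "snd p + _"]) (cases p, auto)

lemma on_hside_horiz_coord: "on_hside P p \<Longrightarrow> snd p \<in> horiz_coords P"
  unfolding on_hside_def
  by (elim exE conjE, rule horiz_coordI[of "fst p - _" _ "fst p + _"]) (cases p, auto)

section \<open>Local structure near a point\<close>

definition in_half :: "bool \<Rightarrow> real \<Rightarrow> bool" where
  "in_half u z \<longleftrightarrow> (if u then 0 \<le> z else z \<le> 0)"

text \<open>Within the open square of radius \<open>r\<close> about \<open>q\<close>, the set \<open>P\<close> is the union of the closed
  quadrants at \<open>q\<close> selected by \<open>Q\<close>; the first (second) argument \<open>True\<close> means the right (upper) half.\<close>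

definition local_quadrants ::
    "(real \<times> real) set \<Rightarrow> real \<times> real \<Rightarrow> real \<Rightarrow> (bool \<Rightarrow> bool \<Rightarrow> bool) \<Rightarrow> bool" where
  "local_quadrants P q r Q \<longleftrightarrow> r > 0 \<and>
     (\<forall>p. \<bar>fst p - fst q\<bar> < r \<and> \<bar>snd p - snd q\<bar> < r \<longrightarrow>
        (p \<in> P \<longleftrightarrow> (\<exists>u v. Q u v \<and> in_half u (fst p - fst q) \<and> in_half v (snd p - snd q))))"

lemma local_quadrantsD:
  assumes "local_quadrants P q r Q"
  shows "r > 0"
    and "\<bar>fst p - fst q\<bar> < r \<Longrightarrow> \<bar>snd p - snd q\<bar> < r \<Longrightarrow>
      p \<in> P \<longleftrightarrow> (\<exists>u v. Q u v \<and> in_half u (fst p - fst q) \<and> in_half v (snd p - snd q))"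
  using assms unfolding local_quadrants_def by blast+

lemma interval_local_halves:
  fixes a b x :: real
  assumes "a < b"
  obtains r U where "r > 0" "\<And>z. \<bar>z - x\<bar> < r \<Longrightarrow> a \<le> z \<and> z \<le> b \<longleftrightarrow> (\<exists>u. U u \<and> in_half u (z - x))"
proof (cases "x < a \<or> b < x")
  case True
  then show ?thesis
    by (intro that[of "if x < a then a - x else x - b" "\<lambda>_. False"]) auto
next
  case False
  then show ?thesis
    using assms
    by (intro that[of "if a < x \<and> x < b then min (x - a) (b - x) else b - a"
          "\<lambda>u. if u then x < b else a < x"])
      (auto simp: in_half_def ex_bool_eq split: if_splits)
qed

lemma local_quadrants_box:
  fixes a b c d :: real
  assumes "a < b" "c < d"
  obtains r Q where "local_quadrants ({a..b} \<times> {c..d}) q r Q"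
proof -
  obtain r1 U where U: "r1 > 0"
    "\<And>z. \<bar>z - fst q\<bar> < r1 \<Longrightarrow> a \<le> z \<and> z \<le> b \<longleftrightarrow> (\<exists>u. U u \<and> in_half u (z - fst q))"
    using interval_local_halves[OF assms(1)] by metis
  obtain r2 V where V: "r2 > 0"
    "\<And>z. \<bar>z - snd q\<bar> < r2 \<Longrightarrow> c \<le> z \<and> z \<le> d \<longleftrightarrow> (\<exists>v. V v \<and> in_half v (z - snd q))"
    using interval_local_halves[OF assms(2)] by metis
  have "local_quadrants ({a..b} \<times> {c..d}) q (min r1 r2) (\<lambda>u v. U u \<and> V v)"
    unfolding local_quadrants_def
  proof (intro conjI allI impI)
    fix p :: "real \<times> real"
    assume "\<bar>fst p - fst q\<bar> < min r1 r2 \<and> \<bar>snd p - snd q\<bar> < min r1 r2"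
    then have "p \<in> {a..b} \<times> {c..d} \<longleftrightarrow>
        (\<exists>u. U u \<and> in_half u (fst p - fst q)) \<and> (\<exists>v. V v \<and> in_half v (snd p - snd q))"
      using U(2)[of "fst p"] V(2)[of "snd p"] by (simp add: mem_Times_iff)
    then show "p \<in> {a..b} \<times> {c..d} \<longleftrightarrow>
        (\<exists>u v. (U u \<and> V v) \<and> in_half u (fst p - fst q) \<and> in_half v (snd p - snd q))"
      by blast
  qed (use U V in simp)
  then show ?thesis
    by (rule that)
qed

lemma local_quadrants_Un:
  "local_quadrants A q r Q \<Longrightarrow> local_quadrants B q s Q' \<Longrightarrow>
    local_quadrants (A \<union> B) q (min r s) (\<lambda>u v. Q u v \<or> Q' u v)"
  unfolding local_quadrants_def by auto

lemma local_quadrants_boxes: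
  assumes "finite R" "\<And>a b c d. (a, b, c, d) \<in> R \<Longrightarrow> a < b \<and> c < d"
  shows "\<exists>r Q. local_quadrants (boxes R) q r Q"
  using assms
proof (induction R rule: finite_induct)
  case empty
  have "local_quadrants (boxes {}) q 1 (\<lambda>_ _. False)"
    by (simp add: local_quadrants_def boxes_def)
  then show ?case
    by blast
next
  case (insert box R)
  obtain a b c d where box: "box = (a, b, c, d)"
    by (cases box)
  then have "a < b" "c < d"
    using insert.prems by auto
  then obtain r Q where "local_quadrants ({a..b} \<times> {c..d}) q r Q"
    by (rule local_quadrants_box)
  moreover obtain r' Q' where "local_quadrants (boxes R) q r' Q'"
    using insert.IH insert.prems by blast
  moreover have "boxes (insert box R) = {a..b} \<times> {c..d} \<union> boxes R"
    by (simp add: boxes_def box)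
  ultimately have "local_quadrants (boxes (insert box R)) q (min r r') (\<lambda>u v. Q u v \<or> Q' u v)"
    using local_quadrants_Un by simp
  then show ?case
    by blast
qed

lemma RP_local_quadrants:
  assumes "RP P"
  obtains r Q where "local_quadrants P q r Q"
proof -
  obtain R where "finite R" "\<And>a b c d. (a, b, c, d) \<in> R \<Longrightarrow> a < b \<and> c < d" "P = boxes R"
    using assms by (meson RP_boxesE)
  then show ?thesis
    using local_quadrants_boxes that by blast
qed

lemma local_quadrants_swap:
  assumes "local_quadrants P q r Q"
  shows "local_quadrants (prod.swap ` P) (prod.swap q) r (\<lambda>u v. Q v u)"
  unfolding local_quadrants_def
proof (intro conjI allI impI)
  fix p :: "real \<times> real"
  assume near: "\<bar>fst p - fst (prod.swap q)\<bar> < r \<and> \<bar>snd p - snd (prod.swap q)\<bar> < r"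
  have "p \<in> prod.swap ` P \<longleftrightarrow> prod.swap p \<in> P"
    by force
  also have "\<dots> \<longleftrightarrow> (\<exists>v u. Q v u \<and> in_half v (snd p - fst q) \<and> in_half u (fst p - snd q))"
    using assms near unfolding local_quadrants_def by (cases p) simp
  finally show "p \<in> prod.swap ` P \<longleftrightarrow>
      (\<exists>u v. Q v u \<and> in_half u (fst p - fst (prod.swap q)) \<and> in_half v (snd p - snd (prod.swap q)))"
    by auto
qed (use assms in \<open>simp add: local_quadrants_def\<close>)

lemma local_quadrants_frontier:
  assumes L: "local_quadrants P q r Q" and "closed P" "q \<in> frontier P"
  shows "\<exists>u v. Q u v" "\<exists>u v. \<not> Q u v"
proof -
  note r = local_quadrantsD(1)[OF L] and near = local_quadrantsD(2)[OF L]
  have "q \<in> P"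
    using assms(2,3) frontier_subset_closed by blast
  then show "\<exists>u v. Q u v"
    using near[of q] r by auto
  show "\<exists>u v. \<not> Q u v"
  proof (rule ccontr)
    assume "\<not> (\<exists>u v. \<not> Q u v)"
    then have all: "Q u v" for u v
      by blast
    have "p \<in> P" if "p \<in> ball q r" for p
    proof -
      have "\<bar>fst p - fst q\<bar> < r" "\<bar>snd p - snd q\<bar> < r"
        using that dist_fst_le[of p q] dist_snd_le[of p q] by (auto simp: dist_commute dist_real_def)
      moreover have "in_half (0 \<le> z) z" for z
        by (simp add: in_half_def)
      ultimately show ?thesis
        using near all by blast
    qed
    then have "ball q r \<subseteq> P"
      by blast
    then have "q \<in> interior P"
      using r by (meson mem_interior)
    then show False
      using assms(3) by (simp add: frontier_def)
  qed
qed

lemma local_quadrants_frontier_hsegment: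
  assumes L: "local_quadrants P q r Q" and "q \<in> frontier P"
    and near: "\<And>z. z \<in> S \<Longrightarrow> \<bar>z - fst q\<bar> < r"
    and jump: "\<And>z. z \<in> S \<Longrightarrow> z \<noteq> fst q \<Longrightarrow> Q (fst q < z) True \<noteq> Q (fst q < z) False"
  shows "S \<times> {snd q} \<subseteq> frontier P"
proof
  fix p
  assume "p \<in> S \<times> {snd q}"
  then obtain z where p: "p = (z, snd q)" and z: "z \<in> S"
    by auto
  show "p \<in> frontier P"
  proof (cases "z = fst q")
    case True
    then show ?thesis
      using assms(2) p by simp
  next
    case False
    define u where "u = (fst q < z)"
    define v where "v = Q u True"
    have half: "in_half u' (z - fst q) \<longleftrightarrow> u' = u" for u'
      using False by (auto simp: u_def in_half_def)
    have Q: "Q u v" "\<not> Q u (\<not> v)"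
      using jump[OF z False] by (auto simp: u_def v_def)
    note r = local_quadrantsD(1)[OF L] and mem = local_quadrantsD(2)[OF L]
    have "p \<in> P"
      using mem[of p] near[OF z] r half Q(1) p by (auto simp: in_half_def)
    moreover have "\<exists>p'. p' \<notin> P \<and> dist p p' < \<epsilon>" if "\<epsilon> > 0" for \<epsilon>
    proof
      define \<delta> where "\<delta> = min \<epsilon> r / 2"
      have \<delta>: "0 < \<delta>" "\<delta> < \<epsilon>" "\<delta> < r"
        using that r by (auto simp: \<delta>_def)
      define p' where "p' = (z, snd q + (if v then - \<delta> else \<delta>))"
      have "in_half v' (snd p' - snd q) \<longleftrightarrow> v' = (\<not> v)" for v'
        using \<delta> by (auto simp: p'_def in_half_def)
      then have "p' \<notin> P"
        using mem[of p'] near[OF z] \<delta> half Q(2) by (auto simp: p'_def)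
      moreover have "dist p p' < \<epsilon>"
        using \<delta> by (simp add: p p'_def dist_Pair_Pair dist_real_def)
      ultimately show "p' \<notin> P \<and> dist p p' < \<epsilon>" ..
    qed
    ultimately show ?thesis
      unfolding frontier_straddle by (metis dist_self)
  qed
qed

lemma local_quadrants_frontier_vsegment:
  assumes "local_quadrants P q r Q" "q \<in> frontier P"
    and "\<And>z. z \<in> S \<Longrightarrow> \<bar>z - snd q\<bar> < r"
    and "\<And>z. z \<in> S \<Longrightarrow> z \<noteq> snd q \<Longrightarrow> Q True (snd q < z) \<noteq> Q False (snd q < z)"
  shows "{fst q} \<times> S \<subseteq> frontier P"
proof -
  have "prod.swap q \<in> frontier (prod.swap ` P)"
    using assms(2) by (simp add: frontier_swap)
  then have "S \<times> {fst q} \<subseteq> frontier (prod.swap ` P)"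
    using local_quadrants_frontier_hsegment[OF local_quadrants_swap[OF assms(1)]] assms(3,4)
    by simp
  then show ?thesis
    unfolding frontier_swap swap_subset_iff product_swap .
qed

lemma local_quadrants_frontier_segments:
  assumes L: "local_quadrants P q r Q" and fr: "q \<in> frontier P" and e: "0 < e" "e < r"
  shows "Q u True \<noteq> Q u False \<Longrightarrow>
      closed_segment q (q + ((if u then 1 else -1) * e, 0)) \<subseteq> frontier P"
    and "Q True v \<noteq> Q False v \<Longrightarrow>
      closed_segment q (q + (0, (if v then 1 else -1) * e)) \<subseteq> frontier P"
    and "\<forall>u. Q u True \<noteq> Q u False \<Longrightarrow> closed_segment (q - (e, 0)) (q + (e, 0)) \<subseteq> frontier P"
    and "\<forall>v. Q True v \<noteq> Q False v \<Longrightarrow> closed_segment (q - (0, e)) (q + (0, e)) \<subseteq> frontier P"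
proof -
  show "closed_segment q (q + ((if u then 1 else -1) * e, 0)) \<subseteq> frontier P"
    if "Q u True \<noteq> Q u False"
  proof -
    have "closed_segment (fst q) (fst q + (if u then 1 else -1) * e) \<times> {snd q} \<subseteq> frontier P"
      by (rule local_quadrants_frontier_hsegment[OF L fr])
        (use that e in \<open>auto simp: closed_segment_eq_real_ivl split: if_splits\<close>)
    then show ?thesis
      by (simp add: closed_segment_same_snd)
  qed
  show "closed_segment q (q + (0, (if v then 1 else -1) * e)) \<subseteq> frontier P"
    if "Q True v \<noteq> Q False v"
  proof -
    have "{fst q} \<times> closed_segment (snd q) (snd q + (if v then 1 else -1) * e) \<subseteq> frontier P"
      by (rule local_quadrants_frontier_vsegment[OF L fr])
        (use that e in \<open>auto simp: closed_segment_eq_real_ivl split: if_splits\<close>)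
    then show ?thesis
      by (simp add: closed_segment_same_fst)
  qed
  show "closed_segment (q - (e, 0)) (q + (e, 0)) \<subseteq> frontier P"
    if "\<forall>u. Q u True \<noteq> Q u False"
  proof -
    have "closed_segment (fst q - e) (fst q + e) \<times> {snd q} \<subseteq> frontier P"
      by (rule local_quadrants_frontier_hsegment[OF L fr])
        (use that e in \<open>auto simp: closed_segment_eq_real_ivl\<close>)
    then show ?thesis
      by (simp add: closed_segment_same_snd)
  qed
  show "closed_segment (q - (0, e)) (q + (0, e)) \<subseteq> frontier P"
    if "\<forall>v. Q True v \<noteq> Q False v"
  proof -
    have "{fst q} \<times> closed_segment (snd q - e) (snd q + e) \<subseteq> frontier P"
      by (rule local_quadrants_frontier_vsegment[OF L fr])
        (use that e in \<open>auto simp: closed_segment_eq_real_ivl\<close>)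
    then show ?thesis
      by (simp add: closed_segment_same_fst)
  qed
qed

lemma RP_frontier_on_side:
  assumes RP: "RP P" and fr: "q \<in> frontier P" and not_corner: "\<not> corner P q"
  shows "on_vside P q \<or> on_hside P q"
proof -
  obtain r Q where L: "local_quadrants P q r Q"
    using RP_local_quadrants[OF RP] .
  define e where "e = r / 2"
  have e: "0 < e" "e < r"
    using local_quadrantsD(1)[OF L] by (auto simp: e_def)
  note segments = local_quadrants_frontier_segments[OF L fr e]
  have "\<exists>u v. Q u v" "\<exists>u v. \<not> Q u v"
    using local_quadrants_frontier[OF L RP_closed[OF RP] fr] by blast+
  then consider (corner) u v where "Q u True \<noteq> Q u False" "Q True v \<noteq> Q False v"
    | (horizontal) "\<forall>u. Q u True \<noteq> Q u False"
    | (vertical) "\<forall>v. Q True v \<noteq> Q False v"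
    unfolding ex_bool_eq all_bool_eq by blast
  then show ?thesis
  proof cases
    case corner
    have "corner P q"
      unfolding corner_def
      using fr e(1) segments(1)[OF corner(1)] segments(2)[OF corner(2)]
      by (intro conjI exI[of _ e] bexI[of _ "if u then 1 else -1"] bexI[of _ "if v then 1 else -1"]) auto
    then show ?thesis
      using not_corner by blast
  next
    case horizontal
    then show ?thesis
      using segments(3) e(1) unfolding on_hside_def by blast
  next
    case vertical
    then show ?thesis
      using segments(4) e(1) unfolding on_vside_def by blast
  qed
qed

section \<open>Unit-speed zigzags on a line\<close>

text \<open>The change of velocity at the \<open>i\<close>-th vertex of a path with \<open>k\<close> legs of velocities
  \<open>a 0, \<dots>, a (k - 1)\<close>, the path being at rest before its start and after its end.\<close>

definition turn :: "nat \<Rightarrow> (nat \<Rightarrow> int) \<Rightarrow> nat \<Rightarrow> int" where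
  "turn k a i = (if 0 < i then a (i - 1) else 0) - (if i < k then a i else 0)"

lemma sum_turn_mult:
  fixes z t :: "nat \<Rightarrow> real"
  assumes "\<And>i. i < k \<Longrightarrow> a i \<in> {-1, 1}" "\<And>i. i < k \<Longrightarrow> z (Suc i) = z i + t i * a i"
  shows "(\<Sum>i\<le>k. of_int (turn k a i) * z i) = (\<Sum>i<k. t i)"
  using assms
proof (induction k)
  case 0
  then show ?case
    by (simp add: turn_def)
next
  case (Suc k)
  have "(\<Sum>i\<le>k. of_int (turn (Suc k) a i) * z i)
      = (\<Sum>i\<le>k. of_int (turn k a i) * z i - (if i = k then of_int (a k) * z k else 0))"
    by (intro sum.cong) (auto simp: turn_def algebra_simps)
  moreover have "turn (Suc k) a (Suc k) = a k"
    by (simp add: turn_def)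
  ultimately have "(\<Sum>i\<le>Suc k. of_int (turn (Suc k) a i) * z i)
      = (\<Sum>i\<le>k. of_int (turn k a i) * z i) - of_int (a k) * z k + of_int (a k) * z (Suc k)"
    by (simp add: sum_subtractf)
  also have "\<dots> = (\<Sum>i\<le>k. of_int (turn k a i) * z i) + t k"
    using Suc.prems[of k] by (auto simp: algebra_simps)
  finally show ?case
    using Suc by simp
qed

lemma turn_nonneg_at_max:
  fixes z t :: "nat \<Rightarrow> real"
  assumes "\<And>i. i < k \<Longrightarrow> t i > 0 \<and> a i \<in> {-1, 1}"
    and "\<And>i. i < k \<Longrightarrow> z (Suc i) = z i + t i * a i"
    and "i \<le> k" "\<And>j. j \<le> k \<Longrightarrow> z j \<le> z i"
  shows "0 \<le> turn k a i"
proof -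
  have "a (i - 1) = 1" if "0 < i"
  proof -
    have "z i = z (i - 1) + t (i - 1) * a (i - 1)" "t (i - 1) > 0" "a (i - 1) \<in> {-1, 1}"
      using assms(1,2)[of "i - 1"] that assms(3) by auto
    moreover have "z (i - 1) \<le> z i"
      using assms(3) assms(4)[of "i - 1"] by simp
    ultimately show ?thesis
      by auto
  qed
  moreover have "a i = -1" if "i < k"
  proof -
    have "z (Suc i) = z i + t i * a i" "t i > 0" "a i \<in> {-1, 1}"
      using assms(1,2)[of i] that by auto
    moreover have "z (Suc i) \<le> z i"
      using assms(4) that by simp
    ultimately show ?thesis
      by auto
  qed
  ultimately have "0 \<le> (if 0 < i then a (i - 1) else 0)" "(if i < k then a i else 0) \<le> 0"
    by auto
  then show ?thesis
    unfolding turn_def by linarith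
qed

lemma turn_nonpos_at_min:
  fixes z t :: "nat \<Rightarrow> real"
  assumes "\<And>i. i < k \<Longrightarrow> t i > 0 \<and> a i \<in> {-1, 1}"
    and "\<And>i. i < k \<Longrightarrow> z (Suc i) = z i + t i * a i"
    and "i \<le> k" "\<And>j. j \<le> k \<Longrightarrow> z i \<le> z j"
  shows "turn k a i \<le> 0"
proof -
  have "0 \<le> turn k (\<lambda>j. - a j) i"
    using assms by (intro turn_nonneg_at_max[where z = "\<lambda>j. - z j" and t = t]) auto
  moreover have "turn k (\<lambda>j. - a j) i = - turn k a i"
    by (simp add: turn_def)
  ultimately show ?thesis
    by linarith
qed

lemma sum_group_by_abs:
  fixes x :: "'i \<Rightarrow> real" and e :: "'i \<Rightarrow> int"
  assumes "finite I" "finite W" "\<forall>w\<in>W. 0 < w"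
    and "\<And>i. i \<in> I \<Longrightarrow> e i \<noteq> 0 \<Longrightarrow> x i \<noteq> 0 \<Longrightarrow> \<bar>x i\<bar> \<in> W"
  shows "(\<Sum>i\<in>I. of_int (e i) * x i) =
    (\<Sum>w\<in>W. of_int ((\<Sum>i | i \<in> I \<and> x i = w. e i) - (\<Sum>i | i \<in> I \<and> x i = - w. e i)) * w)"
proof -
  have "of_int ((\<Sum>i | i \<in> I \<and> x i = w. e i) - (\<Sum>i | i \<in> I \<and> x i = - w. e i)) * w
      = (\<Sum>i\<in>I. if \<bar>x i\<bar> = w then of_int (e i) * x i else 0)" if "w \<in> W" for w
  proof -
    have "w > 0"
      using assms(3) that by blast
    have "of_int ((\<Sum>i | i \<in> I \<and> x i = w. e i) - (\<Sum>i | i \<in> I \<and> x i = - w. e i)) * w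
        = (\<Sum>i\<in>I. of_int ((if x i = w then e i else 0) - (if x i = - w then e i else 0)) * w)"
      using assms(1)
      by (simp add: sum.inter_filter sum_subtractf sum_distrib_right left_diff_distrib of_int_sum)
    also have "\<dots> = (\<Sum>i\<in>I. if \<bar>x i\<bar> = w then of_int (e i) * x i else 0)"
      using \<open>w > 0\<close> by (intro sum.cong) (auto simp: abs_if)
    finally show ?thesis .
  qed
  then have "(\<Sum>w\<in>W. of_int ((\<Sum>i | i \<in> I \<and> x i = w. e i) - (\<Sum>i | i \<in> I \<and> x i = - w. e i)) * w)
      = (\<Sum>i\<in>I. \<Sum>w\<in>W. if \<bar>x i\<bar> = w then of_int (e i) * x i else 0)"
    by (simp add: sum.swap[of _ W I])
  also have "\<dots> = (\<Sum>i\<in>I. of_int (e i) * x i)"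
    using assms(2,4) by (intro sum.cong) (auto simp: sum.delta')
  finally show ?thesis ..
qed

definition zigzag_coeff :: "nat \<Rightarrow> (nat \<Rightarrow> int) \<Rightarrow> (nat \<Rightarrow> real) \<Rightarrow> real \<Rightarrow> int" where
  "zigzag_coeff k a z w =
     (\<Sum>i | i \<in> {..k} \<and> z i = w. turn k a i) - (\<Sum>i | i \<in> {..k} \<and> z i = - w. turn k a i)"

lemma sum_zigzag_coeff:
  fixes z t :: "nat \<Rightarrow> real" and V :: "real set"
  assumes "finite V"
    and "\<And>i. i < k \<Longrightarrow> a i \<in> {-1, 1}" "\<And>i. i < k \<Longrightarrow> z (Suc i) = z i + t i * a i"
    and "\<And>i. i \<le> k \<Longrightarrow> turn k a i \<noteq> 0 \<Longrightarrow> z i \<in> V"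
  shows "(\<Sum>w\<in>abs ` V - {0}. of_int (zigzag_coeff k a z w) * w) = (\<Sum>i<k. t i)"
proof -
  have "(\<Sum>w\<in>abs ` V - {0}. of_int (zigzag_coeff k a z w) * w) = (\<Sum>i\<le>k. of_int (turn k a i) * z i)"
    unfolding zigzag_coeff_def using assms(1,4) by (intro sum_group_by_abs[symmetric]) auto
  also have "\<dots> = (\<Sum>i<k. t i)"
    using assms(2,3) by (rule sum_turn_mult)
  finally show ?thesis .
qed

lemma zigzag_coeff_nonneg_at_max:
  fixes z t :: "nat \<Rightarrow> real"
  assumes steps: "\<And>i. i < k \<Longrightarrow> t i > 0 \<and> a i \<in> {-1, 1}"
      "\<And>i. i < k \<Longrightarrow> z (Suc i) = z i + t i * a i"
    and below: "\<And>i. i \<le> k \<Longrightarrow> z i \<le> R"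
    and "\<And>i. i \<le> k \<Longrightarrow> turn k a i \<noteq> 0 \<Longrightarrow> z i \<noteq> - R"
  shows "0 \<le> zigzag_coeff k a z R"
proof -
  have "(\<Sum>i | i \<in> {..k} \<and> z i = - R. turn k a i) = 0"
    using assms(4) by (intro sum.neutral) auto
  moreover have "0 \<le> turn k a i" if "i \<le> k" "z i = R" for i
    by (rule turn_nonneg_at_max[where z = z and t = t, OF steps that(1)]) (use below that in auto)
  then have "0 \<le> (\<Sum>i | i \<in> {..k} \<and> z i = R. turn k a i)"
    by (intro sum_nonneg) auto
  ultimately show ?thesis
    by (simp add: zigzag_coeff_def)
qed

lemma zigzag_coeff_nonneg_at_min:
  fixes z t :: "nat \<Rightarrow> real"
  assumes steps: "\<And>i. i < k \<Longrightarrow> t i > 0 \<and> a i \<in> {-1, 1}"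
      "\<And>i. i < k \<Longrightarrow> z (Suc i) = z i + t i * a i"
    and above: "\<And>i. i \<le> k \<Longrightarrow> - L \<le> z i"
    and "\<And>i. i \<le> k \<Longrightarrow> turn k a i \<noteq> 0 \<Longrightarrow> z i \<noteq> L"
  shows "0 \<le> zigzag_coeff k a z L"
proof -
  have "(\<Sum>i | i \<in> {..k} \<and> z i = L. turn k a i) = 0"
    using assms(4) by (intro sum.neutral) auto
  moreover have "turn k a i \<le> 0" if "i \<le> k" "z i = - L" for i
    by (rule turn_nonpos_at_min[where z = z and t = t, OF steps that(1)]) (use above that in auto)
  then have "(\<Sum>i | i \<in> {..k} \<and> z i = - L. turn k a i) \<le> 0"
    by (intro sum_nonpos) auto
  ultimately show ?thesis
    by (simp add: zigzag_coeff_def)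
qed

lemma zigzag_coefficients:
  fixes z t :: "nat \<Rightarrow> real" and a :: "nat \<Rightarrow> int" and V :: "real set"
  defines "Vp \<equiv> {v \<in> V. v \<ge> 0}" and "Vm \<equiv> {- v |v. v \<in> V \<and> v < 0}"
  assumes "finite V"
    and steps: "\<And>i. i < k \<Longrightarrow> t i > 0 \<and> a i \<in> {-1, 1}"
      "\<And>i. i < k \<Longrightarrow> z (Suc i) = z i + t i * a i"
    and ends: "z 0 \<in> V" "z k \<in> V"
    and turns: "\<And>i. 0 < i \<Longrightarrow> i < k \<Longrightarrow> a i \<noteq> a (i - 1) \<Longrightarrow> z i \<in> V"
    and upper: "B \<in> V" "\<And>i. i \<le> k \<Longrightarrow> z i \<le> B"
    and lower: "A \<in> V" "\<And>i. i \<le> k \<Longrightarrow> A \<le> z i"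
    and "max0 Vp \<notin> Vm" "max0 Vm \<notin> Vp"
  obtains n :: "real \<Rightarrow> int" where
    "(\<Sum>v\<in>Vp \<union> Vm - {0}. of_int (n v) * v) = (\<Sum>i<k. t i)"
    "max0 Vp \<noteq> 0 \<and> max0 Vm \<noteq> 0 \<longrightarrow> n (max0 Vp) * n (max0 Vm) \<ge> 0"
proof -
  have in_V: "z i \<in> V" if "i \<le> k" "turn k a i \<noteq> 0" for i
    using that ends turns[of i] by (cases "i = 0 \<or> i = k") (auto simp: turn_def)
  have fin: "finite Vp" "finite Vm" "\<forall>v\<in>Vp. 0 \<le> v" "\<forall>v\<in>Vm. 0 \<le> v"
    using \<open>finite V\<close> by (auto simp: Vp_def Vm_def)
  have "Vp \<union> Vm = abs ` V"
    by (auto simp: Vp_def Vm_def image_iff abs_if)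
  moreover have "(\<Sum>v\<in>abs ` V - {0}. of_int (zigzag_coeff k a z v) * v) = (\<Sum>i<k. t i)"
    by (rule sum_zigzag_coeff[where z = z and t = t]) (use \<open>finite V\<close> steps in_V in auto)
  ultimately have sum: "(\<Sum>v\<in>Vp \<union> Vm - {0}. of_int (zigzag_coeff k a z v) * v) = (\<Sum>i<k. t i)"
    by simp
  have "0 \<le> zigzag_coeff k a z (max0 Vp)" if "max0 Vp \<noteq> 0"
  proof (rule zigzag_coeff_nonneg_at_max[where z = z and t = t, OF steps])
    show "z i \<le> max0 Vp" if "i \<le> k" for i
      by (rule le_max0I[OF fin(1,3) upper(2)[OF that]]) (use upper(1) in \<open>auto simp: Vp_def\<close>)
    have "- max0 Vp \<notin> V"
      using \<open>max0 Vp \<notin> Vm\<close> \<open>max0 Vp \<noteq> 0\<close> max0_nonneg[OF fin(1,3)] by (force simp: Vm_def)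
    then show "z i \<noteq> - max0 Vp" if "i \<le> k" "turn k a i \<noteq> 0" for i
      using in_V[OF that] by auto
  qed
  moreover have "0 \<le> zigzag_coeff k a z (max0 Vm)" if "max0 Vm \<noteq> 0"
  proof (rule zigzag_coeff_nonneg_at_min[where z = z and t = t, OF steps])
    show "- max0 Vm \<le> z i" if "i \<le> k" for i
    proof -
      have "- z i \<le> max0 Vm"
        using lower(2)[OF that]
        by (intro le_max0I[OF fin(2,4), of _ "- A"]) (use lower(1) in \<open>auto simp: Vm_def\<close>)
      then show ?thesis
        by simp
    qed
    have "max0 Vm \<notin> V"
      using \<open>max0 Vm \<notin> Vp\<close> max0_nonneg[OF fin(2,4)] by (auto simp: Vp_def)
    then show "z i \<noteq> max0 Vm" if "i \<le> k" "turn k a i \<noteq> 0" for i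
      using in_V[OF that] by auto
  qed
  ultimately show ?thesis
    using that[of "zigzag_coeff k a z"] sum by simp
qed

section \<open>Resonant orbits\<close>

lemma resonant_orbitE:
  assumes RP: "RP P" and "resonant P"
  obtains k :: nat and t :: "nat \<Rightarrow> real" and a b :: "nat \<Rightarrow> int" and q :: "nat \<Rightarrow> real \<times> real"
  where "k \<ge> 1"
    and "\<And>i. i < k \<Longrightarrow> t i > 0 \<and> a i \<in> {-1, 1}" "\<And>i. i < k \<Longrightarrow> t i > 0 \<and> b i \<in> {-1, 1}"
    and "\<And>i. i < k \<Longrightarrow> fst (q (Suc i)) = fst (q i) + t i * a i"
    and "\<And>i. i < k \<Longrightarrow> snd (q (Suc i)) = snd (q i) + t i * b i"
    and "corner P (q 0)" "corner P (q k)"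
    and "\<And>i. 0 < i \<Longrightarrow> i < k \<Longrightarrow> a i \<noteq> a (i - 1) \<Longrightarrow> fst (q i) \<in> vert_coords P"
    and "\<And>i. 0 < i \<Longrightarrow> i < k \<Longrightarrow> b i \<noteq> b (i - 1) \<Longrightarrow> snd (q i) \<in> horiz_coords P"
    and "\<And>i. i \<le> k \<Longrightarrow> q i \<in> P"
proof -
  obtain k q d where k: "k \<ge> 1" and ends: "corner P (q 0)" "corner P (q k)"
    and legs: "\<forall>i<k. fst (d i) \<in> {-1, 1} \<and> snd (d i) \<in> {-1, 1} \<and>
            (\<exists>t>0. q (Suc i) = q i + t *\<^sub>R d i) \<and>
            closed_segment (q i) (q (Suc i)) \<subseteq> P \<and>
            open_segment (q i) (q (Suc i)) \<subseteq> interior P"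
    and bounces: "\<forall>i. 0 < i \<and> i < k \<longrightarrow>
            q i \<in> frontier P \<and> \<not> corner P (q i) \<and>
            (on_vside P (q i) \<longrightarrow> d i = (- fst (d (i - 1)), snd (d (i - 1)))) \<and>
            (on_hside P (q i) \<longrightarrow> d i = (fst (d (i - 1)), - snd (d (i - 1))))"
    using assms(2) unfolding resonant_def by blast
  obtain t where t: "\<And>i. i < k \<Longrightarrow> t i > 0 \<and> q (Suc i) = q i + t i *\<^sub>R d i"
    using legs by metis
  define a where "a i = (if fst (d i) = 1 then 1 else -1 :: int)" for i
  define b where "b i = (if snd (d i) = 1 then 1 else -1 :: int)" for i
  have d: "d i = (of_int (a i), of_int (b i))" "a i \<in> {-1, 1}" "b i \<in> {-1, 1}" if "i < k" for i
    using legs that by (auto simp: a_def b_def prod_eq_iff)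
  have bounce: "q i \<in> frontier P" "\<not> corner P (q i)"
    "on_vside P (q i) \<Longrightarrow> d i = (- fst (d (i - 1)), snd (d (i - 1)))"
    "on_hside P (q i) \<Longrightarrow> d i = (fst (d (i - 1)), - snd (d (i - 1)))"
    if "0 < i" "i < k" for i
    using bounces that by blast+
  have vert: "fst (q i) \<in> vert_coords P" if "0 < i" "i < k" "a i \<noteq> a (i - 1)" for i
  proof -
    have "fst (d i) \<noteq> fst (d (i - 1))"
      using that d(1)[of i] d(1)[of "i - 1"] by auto
    then have "on_vside P (q i)"
      using RP_frontier_on_side[OF RP bounce(1,2)[OF that(1,2)]] bounce(4)[OF that(1,2)] by auto
    then show ?thesis
      by (rule on_vside_vert_coord)
  qed
  have horiz: "snd (q i) \<in> horiz_coords P" if "0 < i" "i < k" "b i \<noteq> b (i - 1)" for i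
  proof -
    have "snd (d i) \<noteq> snd (d (i - 1))"
      using that d(1)[of i] d(1)[of "i - 1"] by auto
    then have "on_hside P (q i)"
      using RP_frontier_on_side[OF RP bounce(1,2)[OF that(1,2)]] bounce(3)[OF that(1,2)] by auto
    then show ?thesis
      by (rule on_hside_horiz_coord)
  qed
  have "q i \<in> P" if "i \<le> k" for i
  proof (cases "i < k")
    case True
    then have "closed_segment (q i) (q (Suc i)) \<subseteq> P"
      using legs by blast
    then show ?thesis
      using ends_in_segment(1) by blast
  next
    case False
    then have "i = Suc (k - 1)"
      using that k by simp
    moreover have "closed_segment (q (k - 1)) (q (Suc (k - 1))) \<subseteq> P"
      using legs k by (meson diff_less zero_less_one less_le_trans)
    ultimately show ?thesis
      using ends_in_segment(2) by blast
  qed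
  with k t d ends vert horiz show ?thesis
    by (intro that[of k t a b q]) auto
qed

lemma vert_zigzag_coefficients:
  fixes z t :: "nat \<Rightarrow> real" and a :: "nat \<Rightarrow> int"
  assumes "RP P" "xP_plus P \<notin> XP_minus P" "xP_minus P \<notin> XP_plus P"
    and "\<And>i. i < k \<Longrightarrow> t i > 0 \<and> a i \<in> {-1, 1}" "\<And>i. i < k \<Longrightarrow> z (Suc i) = z i + t i * a i"
    and "z 0 \<in> vert_coords P" "z k \<in> vert_coords P"
    and "\<And>i. 0 < i \<Longrightarrow> i < k \<Longrightarrow> a i \<noteq> a (i - 1) \<Longrightarrow> z i \<in> vert_coords P"
    and inside: "\<And>i. i \<le> k \<Longrightarrow> z i \<in> fst ` P"
  obtains n :: "real \<Rightarrow> int" where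
    "(\<Sum>x\<in>XP P - {0}. of_int (n x) * x) = (\<Sum>i<k. t i)"
    "xP_plus P \<noteq> 0 \<and> xP_minus P \<noteq> 0 \<longrightarrow> n (xP_plus P) * n (xP_minus P) \<ge> 0"
proof -
  obtain B where B: "B \<in> vert_coords P" "\<And>p. p \<in> P \<Longrightarrow> fst p \<le> B"
    using RP_extreme_vert_coord[OF assms(1), of 1] by auto
  obtain A where A: "A \<in> vert_coords P" "\<And>p. p \<in> P \<Longrightarrow> A \<le> fst p"
    using RP_extreme_vert_coord[OF assms(1), of "-1"] by auto
  note unfold_X = XP_def XP_plus_def XP_minus_def xP_plus_def xP_minus_def
  show ?thesis
  proof (rule zigzag_coefficients[OF finite_vert_coords[OF assms(1)] assms(4-8) B(1) _ A(1)])
    show "z i \<le> B" "A \<le> z i" if "i \<le> k" for i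
      using inside[OF that] A B by auto
    show "max0 {x \<in> vert_coords P. x \<ge> 0} \<notin> {- x |x. x \<in> vert_coords P \<and> x < 0}"
      "max0 {- x |x. x \<in> vert_coords P \<and> x < 0} \<notin> {x \<in> vert_coords P. x \<ge> 0}"
      using assms(2,3) unfolding unfold_X .
  qed (use that in \<open>unfold unfold_X\<close>)
qed

lemma YP_eq_XP_swap:
  "YP_plus P = XP_plus (prod.swap ` P)" "YP_minus P = XP_minus (prod.swap ` P)"
  "YP P = XP (prod.swap ` P)" "yP_plus P = xP_plus (prod.swap ` P)" "yP_minus P = xP_minus (prod.swap ` P)"
  by (simp_all add: YP_plus_def XP_plus_def YP_minus_def XP_minus_def YP_def XP_def yP_plus_def
      xP_plus_def yP_minus_def xP_minus_def horiz_coords_eq_vert_coords_swap)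

lemma horiz_zigzag_coefficients:
  fixes z t :: "nat \<Rightarrow> real" and b :: "nat \<Rightarrow> int"
  assumes "RP P" "yP_plus P \<notin> YP_minus P" "yP_minus P \<notin> YP_plus P"
    and "\<And>i. i < k \<Longrightarrow> t i > 0 \<and> b i \<in> {-1, 1}" "\<And>i. i < k \<Longrightarrow> z (Suc i) = z i + t i * b i"
    and "z 0 \<in> horiz_coords P" "z k \<in> horiz_coords P"
    and "\<And>i. 0 < i \<Longrightarrow> i < k \<Longrightarrow> b i \<noteq> b (i - 1) \<Longrightarrow> z i \<in> horiz_coords P"
    and "\<And>i. i \<le> k \<Longrightarrow> z i \<in> snd ` P"
  obtains m :: "real \<Rightarrow> int" where
    "(\<Sum>y\<in>YP P - {0}. of_int (m y) * y) = (\<Sum>i<k. t i)"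
    "yP_plus P \<noteq> 0 \<and> yP_minus P \<noteq> 0 \<longrightarrow> m (yP_plus P) * m (yP_minus P) \<ge> 0"
proof -
  note swap_eqs = YP_eq_XP_swap horiz_coords_eq_vert_coords_swap
  have swapped: "xP_plus (prod.swap ` P) \<notin> XP_minus (prod.swap ` P)"
    "xP_minus (prod.swap ` P) \<notin> XP_plus (prod.swap ` P)"
    "z 0 \<in> vert_coords (prod.swap ` P)" "z k \<in> vert_coords (prod.swap ` P)"
    "\<And>i. 0 < i \<Longrightarrow> i < k \<Longrightarrow> b i \<noteq> b (i - 1) \<Longrightarrow> z i \<in> vert_coords (prod.swap ` P)"
    "\<And>i. i \<le> k \<Longrightarrow> z i \<in> fst ` prod.swap ` P"
    using assms(2,3,6-9) unfolding swap_eqs by (simp_all add: image_image)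
  obtain m :: "real \<Rightarrow> int" where
    "(\<Sum>y\<in>XP (prod.swap ` P) - {0}. of_int (m y) * y) = (\<Sum>i<k. t i)"
    "xP_plus (prod.swap ` P) \<noteq> 0 \<and> xP_minus (prod.swap ` P) \<noteq> 0 \<longrightarrow>
      m (xP_plus (prod.swap ` P)) * m (xP_minus (prod.swap ` P)) \<ge> 0"
    using vert_zigzag_coefficients[OF RP_swap[OF assms(1)] swapped(1,2) assms(4,5) swapped(3-6)] .
  then show ?thesis
    using that unfolding swap_eqs by blast
qed

lemma resonant_integer_relation:
  assumes "RP P" "resonant P"
    and "xP_plus P \<notin> XP_minus P" "xP_minus P \<notin> XP_plus P"
    and "yP_plus P \<notin> YP_minus P" "yP_minus P \<notin> YP_plus P"
  obtains n m :: "real \<Rightarrow> int" where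
    "(\<Sum>x\<in>XP P - {0}. of_int (n x) * x) > 0"
    "(\<Sum>x\<in>XP P - {0}. of_int (n x) * x) = (\<Sum>y\<in>YP P - {0}. of_int (m y) * y)"
    "xP_plus P \<noteq> 0 \<and> xP_minus P \<noteq> 0 \<longrightarrow> n (xP_plus P) * n (xP_minus P) \<ge> 0"
    "yP_plus P \<noteq> 0 \<and> yP_minus P \<noteq> 0 \<longrightarrow> m (yP_plus P) * m (yP_minus P) \<ge> 0"
proof -
  obtain k :: nat and t :: "nat \<Rightarrow> real" and a b :: "nat \<Rightarrow> int" and q :: "nat \<Rightarrow> real \<times> real"
    where k: "k \<ge> 1"
    and legs: "\<And>i. i < k \<Longrightarrow> t i > 0 \<and> a i \<in> {-1, 1}" "\<And>i. i < k \<Longrightarrow> t i > 0 \<and> b i \<in> {-1, 1}"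
      "\<And>i. i < k \<Longrightarrow> fst (q (Suc i)) = fst (q i) + t i * a i"
      "\<And>i. i < k \<Longrightarrow> snd (q (Suc i)) = snd (q i) + t i * b i"
    and ends: "corner P (q 0)" "corner P (q k)"
    and turns: "\<And>i. 0 < i \<Longrightarrow> i < k \<Longrightarrow> a i \<noteq> a (i - 1) \<Longrightarrow> fst (q i) \<in> vert_coords P"
      "\<And>i. 0 < i \<Longrightarrow> i < k \<Longrightarrow> b i \<noteq> b (i - 1) \<Longrightarrow> snd (q i) \<in> horiz_coords P"
    and inside: "\<And>i. i \<le> k \<Longrightarrow> q i \<in> P"
    by (rule resonant_orbitE[OF assms(1,2)]) (rule that)
  obtain n where n: "(\<Sum>x\<in>XP P - {0}. of_int (n x) * x) = (\<Sum>i<k. t i)"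
    "xP_plus P \<noteq> 0 \<and> xP_minus P \<noteq> 0 \<longrightarrow> n (xP_plus P) * n (xP_minus P) \<ge> 0"
    by (rule vert_zigzag_coefficients[where z = "\<lambda>i. fst (q i)", OF assms(1,3,4) legs(1,3) corner_coords(1)[OF ends(1)]
          corner_coords(1)[OF ends(2)] turns(1)]) (use inside in auto)
  obtain m where m: "(\<Sum>y\<in>YP P - {0}. of_int (m y) * y) = (\<Sum>i<k. t i)"
    "yP_plus P \<noteq> 0 \<and> yP_minus P \<noteq> 0 \<longrightarrow> m (yP_plus P) * m (yP_minus P) \<ge> 0"
    by (rule horiz_zigzag_coefficients[where z = "\<lambda>i. snd (q i)", OF assms(1,5,6) legs(2,4) corner_coords(2)[OF ends(1)]
          corner_coords(2)[OF ends(2)] turns(2)]) (use inside in auto)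
  have "(\<Sum>i<k. t i) > 0"
    using k legs(1) by (intro sum_pos) (auto simp: lessThan_empty_iff)
  with n m show ?thesis
    by (intro that[of n m]) simp_all
qed

theorem theorem4p1:
  fixes P :: "(real \<times> real) set"
  assumes "RP P"
    and "xP_plus P \<notin> XP_minus P" and "xP_minus P \<notin> XP_plus P"
    and "yP_plus P \<notin> YP_minus P" and "yP_minus P \<notin> YP_plus P"
    and "\<forall>(n :: real \<Rightarrow> int) (m :: real \<Rightarrow> int).
           ((\<exists>x\<in>XP P - {0}. n x \<noteq> 0) \<or> (\<exists>y\<in>YP P - {0}. m y \<noteq> 0)) \<and>
           (xP_plus P \<noteq> 0 \<and> xP_minus P \<noteq> 0 \<longrightarrow> n (xP_plus P) * n (xP_minus P) \<ge> 0) \<and>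
           (yP_plus P \<noteq> 0 \<and> yP_minus P \<noteq> 0 \<longrightarrow> m (yP_plus P) * m (yP_minus P) \<ge> 0)
           \<longrightarrow> (\<Sum>x\<in>XP P - {0}. of_int (n x) * x) - (\<Sum>y\<in>YP P - {0}. of_int (m y) * y) \<noteq> 0"
  shows "\<not> resonant P"
proof
  assume "resonant P"
  obtain n m :: "real \<Rightarrow> int" where
    pos: "(\<Sum>x\<in>XP P - {0}. of_int (n x) * x) > 0"
    and rel: "(\<Sum>x\<in>XP P - {0}. of_int (n x) * x) = (\<Sum>y\<in>YP P - {0}. of_int (m y) * y)"
    and signs: "xP_plus P \<noteq> 0 \<and> xP_minus P \<noteq> 0 \<longrightarrow> n (xP_plus P) * n (xP_minus P) \<ge> 0"
      "yP_plus P \<noteq> 0 \<and> yP_minus P \<noteq> 0 \<longrightarrow> m (yP_plus P) * m (yP_minus P) \<ge> 0"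
    by (rule resonant_integer_relation[OF assms(1) \<open>resonant P\<close> assms(2-5)]) (rule that)
  have "\<exists>x\<in>XP P - {0}. n x \<noteq> 0"
  proof (rule ccontr)
    assume "\<not> ?thesis"
    then have "(\<Sum>x\<in>XP P - {0}. of_int (n x) * x) = 0"
      by (intro sum.neutral) auto
    with pos show False
      by simp
  qed
  with assms(6) signs have "(\<Sum>x\<in>XP P - {0}. of_int (n x) * x) - (\<Sum>y\<in>YP P - {0}. of_int (m y) * y) \<noteq> 0"
    by blast
  with rel show False
    by simp
qed

end
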